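(* Let $k=k(x)\ge2$ and $t=t(x)\ge1$ be functions of $x$ ($t$ integer-valued), and let $m$ be a uniformly random integer in $[1,x]$. Then \[ \mathbb{P}\big(\forall\,0\le i<t\ \exists\text{ prime }p_i>k\text{ with }v_{p_i}(m-i)=1\big)=1-O\Big(\frac{t\log k}{\log x}+\frac tk\Big), \] with an absolute implied constant.
   Context: $v_p$ denotes the $p$-adic valuation on the integers. *)

theory Defs
  imports Complex_Main "HOL-Computational_Algebra.Primes"
begin

text \<open>Good event: for every 0 <= i < t there is a prime p > k with v_p(m - i) = 1.
  (For m - i = 0 the valuation is infinite, and Isabelle's multiplicity of 0 is 0, so
  the condition correctly fails.)\<close>
definition good :: "real \<Rightarrow> nat \<Rightarrow> nat \<Rightarrow> bool" where
  "good k t m \<longleftrightarrow> (\<forall>i<t. \<exists>p::nat. prime p \<and> real p > k \<and>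
       multiplicity (int p) (int m - int i) = 1)"

definition prob_good :: "real \<Rightarrow> real \<Rightarrow> nat \<Rightarrow> real" where
  "prob_good x k t = real (card {m \<in> {1..nat \<lfloor>x\<rfloor>}. good k t m}) / real (nat \<lfloor>x\<rfloor>)"

end

theory Submission
  imports Defs
begin

text \<open>Let \<open>N = \<lfloor>x\<rfloor>\<close> and \<open>K = \<lfloor>k\<rfloor>\<close>. If \<open>m \<le> N\<close> is bad, then either \<open>m \<le> t\<close>, or for some
  \<open>i < t\<close> the number \<open>n = m - i\<close> has no prime \<open>p > K\<close> with \<open>v\<^sub>p(n) = 1\<close>, so that \<open>n\<close> is
  \<open>K\<close>-smooth or divisible by \<open>j\<^sup>2\<close> for some \<open>j > K\<close>. Since \<open>\<Sum>j>K. 1/j\<^sup>2 \<le> 1/K\<close>, at most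
  \<open>N/K\<close> numbers \<open>n \<le> N\<close> are of the second kind. For the smooth ones,
  \<open>\<Sum> ln n = \<Sum>p\<le>K. ln p \<Sum>n. v\<^sub>p(n) \<le> N \<Sum>p\<le>K. ln p/(p-1) \<le> 4 N ln K\<close> by the Chebyshev-type
  bound \<open>\<Sum>p\<le>K. ln p \<lfloor>K/p\<rfloor> \<le> ln K!\<close>; as all but \<open>\<surd>N\<close> of them exceed \<open>\<surd>N\<close>, there are
  \<open>O(\<surd>N + N ln K / ln N)\<close> of them. A union bound over the \<open>t\<close> shifts gives the claim.\<close>

lemma card_multiples_atLeastAtMost:
  fixes d N :: nat
  assumes "d > 0"
  shows "card {n \<in> {1..N}. d dvd n} = N div d"
proof -
  have "{n \<in> {1..N}. d dvd n} = (\<lambda>q. d * q) ` {1..N div d}"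
    using assms by (auto simp: less_eq_div_iff_mult_less_eq mult.commute intro!: Nat.gr0I)
  also have "card \<dots> = N div d"
    using assms by (subst card_image) (auto simp: inj_on_def)
  finally show ?thesis .
qed

lemma sum_power_atLeast1_le:
  fixes r :: real
  assumes "0 \<le> r" "r < 1"
  shows "(\<Sum>a=1..M. r ^ a) \<le> r / (1 - r)"
  using assms by (auto simp: sum_gp divide_right_mono)

lemma multiplicity_eq_card_prime_powers_dvd:
  fixes p n N :: nat
  assumes p: "prime p" and n: "n \<in> {1..N}"
  shows "multiplicity p n = card {a \<in> {1..N}. p ^ a dvd n}"
proof -
  have "multiplicity p n < 2 ^ multiplicity p n" by (rule less_exp)
  also have "\<dots> \<le> p ^ multiplicity p n"
    using prime_ge_2_nat[OF p] by (intro power_mono) auto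
  also have "\<dots> \<le> n"
    using n by (intro dvd_imp_le multiplicity_dvd) auto
  finally have "multiplicity p n \<le> N" using n by simp
  moreover have "p ^ a dvd n \<longleftrightarrow> a \<le> multiplicity p n" for a
    using n p by (intro power_dvd_iff_le_multiplicity) auto
  ultimately have "{a \<in> {1..N}. p ^ a dvd n} = {1..multiplicity p n}"
    by (intro set_eqI) (simp, linarith)
  then show ?thesis by simp
qed

text \<open>Legendre: the sum equals \<open>\<Sum>a\<ge>1. \<lfloor>N/p\<^sup>a\<rfloor>\<close>.\<close>
lemma sum_multiplicity_le:
  fixes p N :: nat
  assumes p: "prime p"
  shows "(\<Sum>n=1..N. real (multiplicity p n)) \<le> real N / (real p - 1)"
proof -
  have p2: "real p \<ge> 2" using prime_ge_2_nat[OF p] by linarith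
  have "(\<Sum>n=1..N. real (multiplicity p n)) = (\<Sum>n=1..N. \<Sum>a=1..N. of_bool (p ^ a dvd n))"
    using p by (intro sum.cong refl)
      (simp add: multiplicity_eq_card_prime_powers_dvd[where N = N] Int_def)
  also have "\<dots> = (\<Sum>a=1..N. real (N div p ^ a))"
  proof (subst sum.swap, intro sum.cong refl)
    fix a
    have "card {n \<in> {1..N}. p ^ a dvd n} = N div p ^ a"
      using p by (intro card_multiples_atLeastAtMost) (simp add: prime_gt_0_nat)
    then show "(\<Sum>n=1..N. of_bool (p ^ a dvd n)) = real (N div p ^ a)"
      by (simp add: Int_def)
  qed
  also have "\<dots> \<le> (\<Sum>a=1..N. real N * (1 / real p) ^ a)"
    by (intro sum_mono) (use of_nat_div_le_of_nat[of N "p ^ a" for a] in \<open>simp add: power_divide\<close>)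
  also have "\<dots> \<le> real N * ((1 / real p) / (1 - 1 / real p))"
    unfolding sum_distrib_left[symmetric] using p2 by (intro mult_left_mono sum_power_atLeast1_le) auto
  also have "\<dots> = real N / (real p - 1)"
    using p2 by (simp add: field_simps)
  finally show ?thesis .
qed

lemma ln_eq_sum_multiplicity:
  fixes n :: nat and P :: "nat set"
  assumes n: "n > 0" and P: "finite P" "prime_factors n \<subseteq> P" "\<And>p. p \<in> P \<Longrightarrow> prime p"
  shows "ln (real n) = (\<Sum>p\<in>P. real (multiplicity p n) * ln (real p))"
proof -
  have "real n = (\<Prod>p\<in>prime_factors n. real p ^ multiplicity p n)"
    using prod_prime_factors[of n] n by (simp flip: of_nat_power of_nat_prod)
  then have "ln (real n) = (\<Sum>p\<in>prime_factors n. real (multiplicity p n) * ln (real p))"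
    by (simp add: ln_prod ln_realpow prime_gt_0_nat in_prime_factors_imp_prime)
  also have "\<dots> = (\<Sum>p\<in>P. real (multiplicity p n) * ln (real p))"
    using P by (intro sum.mono_neutral_left)
      (auto simp: in_prime_factors_iff not_dvd_imp_multiplicity_0)
  finally show ?thesis .
qed

lemma sum_ln_prime_times_div_le:
  fixes K :: nat
  shows "(\<Sum>p | prime p \<and> p \<le> K. ln (real p) * real (K div p)) \<le> real K * ln (real K)"
proof -
  define P where "P = {p. prime p \<and> p \<le> K}"
  have finP: "finite P" unfolding P_def by auto
  have "(\<Sum>p\<in>P. ln (real p) * real (K div p)) = (\<Sum>p\<in>P. \<Sum>n=1..K. of_bool (p dvd n) * ln (real p))"
  proof (intro sum.cong refl)
    fix p assume "p \<in> P"
    then have "card {n \<in> {1..K}. p dvd n} = K div p"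
      by (intro card_multiples_atLeastAtMost) (auto simp: P_def prime_gt_0_nat)
    then show "ln (real p) * real (K div p) = (\<Sum>n=1..K. of_bool (p dvd n) * ln (real p))"
      by (simp add: Int_def mult.commute)
  qed
  also have "\<dots> \<le> (\<Sum>p\<in>P. \<Sum>n=1..K. real (multiplicity p n) * ln (real p))"
  proof (intro sum_mono mult_right_mono)
    fix p n assume "p \<in> P" "n \<in> {1..K}"
    then show "of_bool (p dvd n) \<le> real (multiplicity p n)" "0 \<le> ln (real p)"
      using multiplicity_gt_zero_iff[of n p] prime_gt_1_nat[of p]
      by (auto simp: P_def prime_gt_0_nat Suc_le_eq)
  qed
  also have "\<dots> = (\<Sum>n=1..K. ln (real n))"
    using finP by (subst sum.swap, intro sum.cong refl ln_eq_sum_multiplicity[symmetric])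
      (auto simp: P_def in_prime_factors_iff dest!: dvd_imp_le)
  also have "\<dots> \<le> real K * ln (real K)"
    using sum_bounded_above[of "{1..K}" "\<lambda>n. ln (real n)" "ln (real K)"] by simp
  finally show ?thesis unfolding P_def .
qed

lemma inverse_minus_one_le_div:
  fixes p K :: nat
  assumes p2: "p \<ge> 2" and p: "p \<le> K"
  shows "1 / (real p - 1) \<le> 4 * real (K div p) / real K"
proof -
  have "K < K div p * p + p"
    using p2 div_mult_mod_eq[of K p] mod_less_divisor[of p K] by linarith
  also have "\<dots> \<le> 2 * p * (K div p)"
    using p by (simp add: Suc_le_eq div_greater_zero_iff)
  finally have K_le: "real K \<le> 2 * real p * real (K div p)"
    by (metis less_imp_le of_nat_le_iff of_nat_mult of_nat_numeral)
  have "1 / (real p - 1) \<le> 2 / real p" using p2 by (simp add: field_simps)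
  also have "\<dots> \<le> 4 * real (K div p) / real K"
    using K_le p2 p by (simp add: field_simps)
  finally show ?thesis .
qed

lemma sum_ln_prime_over_pred_le:
  fixes K :: nat
  assumes K: "K \<ge> 1"
  shows "(\<Sum>p | prime p \<and> p \<le> K. ln (real p) / (real p - 1)) \<le> 4 * ln (real K)"
proof -
  have "(\<Sum>p | prime p \<and> p \<le> K. ln (real p) / (real p - 1))
     \<le> (\<Sum>p | prime p \<and> p \<le> K. ln (real p) * (4 * real (K div p) / real K))"
  proof (intro sum_mono)
    fix p assume "p \<in> {p. prime p \<and> p \<le> K}"
    then have "ln (real p) * (1 / (real p - 1)) \<le> ln (real p) * (4 * real (K div p) / real K)"
      by (intro mult_left_mono inverse_minus_one_le_div) (auto simp: Suc_le_eq prime_gt_0_nat prime_ge_2_nat)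
    then show "ln (real p) / (real p - 1) \<le> ln (real p) * (4 * real (K div p) / real K)"
      by simp
  qed
  also have "\<dots> = 4 / real K * (\<Sum>p | prime p \<and> p \<le> K. ln (real p) * real (K div p))"
    by (simp add: sum_distrib_left ac_simps)
  also have "\<dots> \<le> 4 / real K * (real K * ln (real K))"
    by (intro mult_left_mono sum_ln_prime_times_div_le) simp
  also have "\<dots> = 4 * ln (real K)" using K by simp
  finally show ?thesis .
qed

definition smooth :: "nat \<Rightarrow> nat \<Rightarrow> bool" where
  "smooth K n \<longleftrightarrow> (\<forall>p. prime p \<and> p dvd n \<longrightarrow> p \<le> K)"

lemma sum_ln_smooth_le:
  fixes N K :: nat
  assumes K: "K \<ge> 1"
  shows "(\<Sum>n\<in>{n \<in> {1..N}. smooth K n}. ln (real n)) \<le> 4 * real N * ln (real K)"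
proof -
  define P where "P = {p. prime p \<and> p \<le> K}"
  have finP: "finite P" unfolding P_def by auto
  have "(\<Sum>n\<in>{n \<in> {1..N}. smooth K n}. ln (real n))
      = (\<Sum>n\<in>{n \<in> {1..N}. smooth K n}. \<Sum>p\<in>P. real (multiplicity p n) * ln (real p))"
    using finP by (intro sum.cong refl ln_eq_sum_multiplicity)
      (auto simp: smooth_def P_def in_prime_factors_iff)
  also have "\<dots> \<le> (\<Sum>n=1..N. \<Sum>p\<in>P. real (multiplicity p n) * ln (real p))"
    by (intro sum_mono2 sum_nonneg mult_nonneg_nonneg)
      (auto simp: P_def prime_gt_0_nat Suc_le_eq)
  also have "\<dots> = (\<Sum>p\<in>P. ln (real p) * (\<Sum>n=1..N. real (multiplicity p n)))"
    by (subst sum.swap) (simp add: sum_distrib_left mult.commute)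
  also have "\<dots> \<le> (\<Sum>p\<in>P. ln (real p) * (real N / (real p - 1)))"
    by (intro sum_mono mult_left_mono sum_multiplicity_le)
      (auto simp: P_def prime_gt_0_nat Suc_le_eq)
  also have "\<dots> = real N * (\<Sum>p\<in>P. ln (real p) / (real p - 1))"
    by (simp add: sum_distrib_left mult.commute)
  also have "\<dots> \<le> real N * (4 * ln (real K))"
    unfolding P_def using K by (intro mult_left_mono sum_ln_prime_over_pred_le) auto
  finally show ?thesis by simp
qed

lemma card_smooth_le:
  fixes N K :: nat
  assumes N: "N \<ge> 2" and K: "K \<ge> 1"
  shows "real (card {n \<in> {1..N}. smooth K n}) \<le> sqrt (real N) + 8 * real N * ln (real K) / ln (real N)"
proof -
  define S where "S = {n \<in> {1..N}. smooth K n}"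
  define T where "T = {n \<in> S. sqrt (real N) < real n}"
  have lnN: "ln (real N) > 0" using N by simp
  have "real (card T) * (ln (real N) / 2) = (\<Sum>n\<in>T. ln (sqrt (real N)))"
    using N by (simp add: ln_sqrt)
  also have "\<dots> \<le> (\<Sum>n\<in>T. ln (real n))"
    using N by (intro sum_mono ln_mono) (auto simp: T_def)
  also have "\<dots> \<le> (\<Sum>n\<in>S. ln (real n))"
    by (intro sum_mono2) (auto simp: T_def S_def)
  also have "\<dots> \<le> 4 * real N * ln (real K)"
    unfolding S_def using K by (rule sum_ln_smooth_le)
  finally have T_le: "real (card T) \<le> 8 * real N * ln (real K) / ln (real N)"
    using lnN by (simp add: field_simps)
  have "S \<subseteq> T \<union> {1..nat \<lfloor>sqrt (real N)\<rfloor>}"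
    using le_nat_floor[of _ "sqrt (real N)"] by (force simp: S_def T_def)
  then have "card S \<le> card (T \<union> {1..nat \<lfloor>sqrt (real N)\<rfloor>})"
    by (intro card_mono) (auto simp: S_def T_def)
  also have "\<dots> \<le> card T + nat \<lfloor>sqrt (real N)\<rfloor>"
    using card_Un_le[of T "{1..nat \<lfloor>sqrt (real N)\<rfloor>}"] by simp
  finally have "real (card S) \<le> real (card T) + real (nat \<lfloor>sqrt (real N)\<rfloor>)"
    by (metis of_nat_add of_nat_le_iff)
  moreover have "real (nat \<lfloor>sqrt (real N)\<rfloor>) \<le> sqrt (real N)" by simp
  ultimately have "real (card S) \<le> sqrt (real N) + 8 * real N * ln (real K) / ln (real N)"
    using T_le by linarith
  then show ?thesis by (simp only: S_def)
qed

lemma sum_inverse_squares_le: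
  fixes K N :: nat
  assumes K: "K \<ge> 1"
  shows "(\<Sum>j=K+1..N. 1 / real j ^ 2) \<le> 1 / real K"
proof (cases "K \<le> N")
  case True
  have "(\<Sum>j=K+1..N. 1 / real j ^ 2) \<le> (\<Sum>j=Suc K..N. (- 1 / real j) - (- 1 / real (j - 1)))"
    using K unfolding Suc_eq_plus1 by (intro sum_mono) (auto simp: field_simps power2_eq_square of_nat_diff)
  also have "\<dots> = 1 / real K - 1 / real N"
    using True by (subst sum_telescope'') simp_all
  also have "\<dots> \<le> 1 / real K" by simp
  finally show ?thesis by simp
qed simp

lemma card_square_divisible_le:
  fixes N K :: nat
  assumes K: "K \<ge> 1"
  shows "real (card {n \<in> {1..N}. \<exists>j. K < j \<and> j\<^sup>2 dvd n}) \<le> real N / real K"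
proof -
  have "{n \<in> {1..N}. \<exists>j. K < j \<and> j\<^sup>2 dvd n} \<subseteq> (\<Union>j\<in>{K+1..N}. {n \<in> {1..N}. j\<^sup>2 dvd n})"
  proof clarify
    fix n j assume n: "n \<in> {1..N}" and j: "K < j" "j\<^sup>2 dvd n"
    have "j \<le> j\<^sup>2" by (simp add: power2_eq_square)
    also have "j\<^sup>2 \<le> n" using j n by (intro dvd_imp_le) auto
    finally show "n \<in> (\<Union>j\<in>{K+1..N}. {n \<in> {1..N}. j\<^sup>2 dvd n})"
      using n j by auto
  qed
  then have "card {n \<in> {1..N}. \<exists>j. K < j \<and> j\<^sup>2 dvd n} \<le> card (\<Union>j\<in>{K+1..N}. {n \<in> {1..N}. j\<^sup>2 dvd n})"
    by (intro card_mono) auto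
  also have "\<dots> \<le> (\<Sum>j=K+1..N. card {n \<in> {1..N}. j\<^sup>2 dvd n})"
    by (rule card_UN_le) simp
  also have "\<dots> = (\<Sum>j=K+1..N. N div j\<^sup>2)"
    using K by (intro sum.cong refl card_multiples_atLeastAtMost) auto
  finally have "real (card {n \<in> {1..N}. \<exists>j. K < j \<and> j\<^sup>2 dvd n}) \<le> (\<Sum>j=K+1..N. real (N div j\<^sup>2))"
    by (simp flip: of_nat_sum)
  also have "\<dots> \<le> (\<Sum>j=K+1..N. real N * (1 / real j ^ 2))"
    by (intro sum_mono) (use of_nat_div_le_of_nat[of N "j\<^sup>2" for j] in simp)
  also have "\<dots> \<le> real N * (1 / real K)"
    unfolding sum_distrib_left[symmetric] using K by (intro mult_left_mono sum_inverse_squares_le) auto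
  finally show ?thesis by simp
qed

lemma multiplicity_of_nat_int: "multiplicity (int p) (int n) = multiplicity p n"
  unfolding multiplicity_def by (simp flip: of_nat_power add: int_dvd_int_iff)

lemma smooth_or_large_square_dvd:
  fixes n K :: nat
  assumes n: "n > 0" and not_exact: "\<And>p. prime p \<Longrightarrow> K < p \<Longrightarrow> multiplicity p n \<noteq> 1"
  shows "smooth K n \<or> (\<exists>j. K < j \<and> j\<^sup>2 dvd n)"
proof (cases "smooth K n")
  case False
  then obtain p where p: "prime p" "p dvd n" "K < p"
    by (auto simp: smooth_def not_le)
  then have "multiplicity p n > 0"
    using n by (simp add: prime_multiplicity_gt_zero_iff)
  with not_exact[OF p(1,3)] have "2 \<le> multiplicity p n" by linarith
  then have "p\<^sup>2 dvd n" by (rule multiplicity_dvd')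
  with p show ?thesis by blast
qed simp

lemma not_good_subset:
  fixes k :: real and t N :: nat
  defines "K \<equiv> nat \<lfloor>k\<rfloor>"
  shows "{m \<in> {1..N}. \<not> good k t m}
           \<subseteq> {1..t} \<union> (\<Union>i<t. (\<lambda>n. n + i) ` {n \<in> {1..N}. smooth K n \<or> (\<exists>j. K < j \<and> j\<^sup>2 dvd n)})"
proof
  fix m assume "m \<in> {m \<in> {1..N}. \<not> good k t m}"
  then have m: "m \<in> {1..N}" and "\<not> good k t m" by auto
  then obtain i where i: "i < t"
    and not_exact: "\<And>p. prime p \<Longrightarrow> real p > k \<Longrightarrow> multiplicity (int p) (int m - int i) \<noteq> 1"
    unfolding good_def by blast
  show "m \<in> {1..t} \<union> (\<Union>i<t. (\<lambda>n. n + i) ` {n \<in> {1..N}. smooth K n \<or> (\<exists>j. K < j \<and> j\<^sup>2 dvd n)})"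
  proof (cases "m \<le> t")
    case False
    define n where "n = m - i"
    have m_eq: "m = n + i" and n: "n \<in> {1..N}" and int_n: "int m - int i = int n"
      using m i False by (auto simp: n_def)
    have "multiplicity p n \<noteq> 1" if "prime p" "K < p" for p
    proof -
      have "real p > k" using that(2) unfolding K_def by linarith
      then show ?thesis
        using not_exact[OF that(1)] by (simp add: int_n multiplicity_of_nat_int)
    qed
    then have "smooth K n \<or> (\<exists>j. K < j \<and> j\<^sup>2 dvd n)"
      using n by (intro smooth_or_large_square_dvd) auto
    with n i m_eq show ?thesis by blast
  qed (use m in auto)
qed

lemma card_not_good_le:
  fixes k :: real and t N :: nat
  defines "K \<equiv> nat \<lfloor>k\<rfloor>"
  shows "card {m \<in> {1..N}. \<not> good k t m}
           \<le> t * (1 + card {n \<in> {1..N}. smooth K n} + card {n \<in> {1..N}. \<exists>j. K < j \<and> j\<^sup>2 dvd n})"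
proof -
  define S where "S = {n \<in> {1..N}. smooth K n}"
  define Q where "Q = {n \<in> {1..N}. \<exists>j. K < j \<and> j\<^sup>2 dvd n}"
  have "{n \<in> {1..N}. smooth K n \<or> (\<exists>j. K < j \<and> j\<^sup>2 dvd n)} = S \<union> Q"
    by (auto simp: S_def Q_def)
  then have "card {m \<in> {1..N}. \<not> good k t m} \<le> card ({1..t} \<union> (\<Union>i<t. (\<lambda>n. n + i) ` (S \<union> Q)))"
    using not_good_subset[of N k t] unfolding K_def by (intro card_mono) (simp_all add: S_def Q_def)
  also have "\<dots> \<le> card {1..t} + card (\<Union>i<t. (\<lambda>n. n + i) ` (S \<union> Q))"
    by (rule card_Un_le)
  also have "card (\<Union>i<t. (\<lambda>n. n + i) ` (S \<union> Q)) \<le> (\<Sum>i<t. card ((\<lambda>n. n + i) ` (S \<union> Q)))"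
    by (rule card_UN_le) simp
  also have "\<dots> \<le> (\<Sum>i<t. card S + card Q)"
    by (intro sum_mono order_trans[OF card_image_le card_Un_le]) (auto simp: S_def Q_def)
  finally show ?thesis by (simp add: S_def Q_def algebra_simps)
qed

lemma error_terms_le:
  fixes N K :: nat and x k :: real
  assumes N: "N \<ge> 2" "real N \<le> x" "x < real N + 1"
    and K: "K \<ge> 2" "real K \<le> k" "k < real K + 1"
  shows "(1 + (sqrt (real N) + 8 * real N * ln (real K) / ln (real N)) + real N / real K) / real N
           \<le> 30 * (ln k / ln x + 1 / k)"
proof -
  have lnN: "ln (real N) > 0" and lnx: "ln x > 0" using N by auto
  have "2 * real N \<le> real N * real N" using N by (intro mult_right_mono) auto
  then have "x \<le> real N * real N" using N by linarith
  then have "ln x \<le> ln (real N * real N)"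
    using N by (intro ln_mono) auto
  then have "ln x \<le> 2 * ln (real N)" using N by (simp add: ln_mult)
  then have inv_lnN: "1 / ln (real N) \<le> 2 / ln x"
    using lnN lnx by (simp add: field_simps)
  have "ln (1/2::real) \<le> 1/2 - 1" by (rule ln_le_minus_one) simp
  moreover have "ln 2 \<le> ln k" using K by (intro ln_mono) auto
  ultimately have lnk: "2 \<le> 4 * ln k" by (simp add: ln_div)
  have "ln (sqrt (real N)) \<le> sqrt (real N) - 1" using N by (intro ln_le_minus_one) simp
  then have "ln (real N) \<le> 2 * sqrt (real N)" using N by (simp add: ln_sqrt)
  then have "sqrt (real N) * ln (real N) \<le> sqrt (real N) * (2 * sqrt (real N))"
    by (intro mult_left_mono) auto
  also have "\<dots> = 2 * real N" by simp
  finally have "sqrt (real N) / real N \<le> 2 / ln (real N)"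
    using N lnN by (simp add: field_simps)
  also have "\<dots> \<le> 4 / ln x" using inv_lnN by simp
  also have "\<dots> \<le> 8 * (ln k / ln x)" using lnk lnx by (simp add: field_simps)
  finally have sqrt_term: "sqrt (real N) / real N \<le> 8 * (ln k / ln x)" .
  have "1 / real N \<le> 1 / ln (real N)"
    using N lnN ln_le_minus_one[of "real N"] by (intro divide_left_mono) auto
  also have "\<dots> \<le> 2 / ln x" by (rule inv_lnN)
  also have "\<dots> \<le> 4 * (ln k / ln x)" using lnk lnx by (simp add: field_simps)
  finally have one_term: "1 / real N \<le> 4 * (ln k / ln x)" .
  have "ln (real K) * (1 / ln (real N)) \<le> ln k * (2 / ln x)"
    using K lnN lnx inv_lnN by (intro mult_mono ln_mono) auto
  then have smooth_term: "8 * (ln (real K) / ln (real N)) \<le> 16 * (ln k / ln x)" by simp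
  have square_term: "1 / real K \<le> 2 * (1 / k)" using K by (simp add: field_simps)
  have "(1 + (sqrt (real N) + 8 * real N * ln (real K) / ln (real N)) + real N / real K) / real N
      = 1 / real N + sqrt (real N) / real N + 8 * (ln (real K) / ln (real N)) + 1 / real K"
    using N by (simp add: field_simps)
  also have "\<dots> \<le> 28 * (ln k / ln x) + 2 * (1 / k)"
    using one_term sqrt_term smooth_term square_term by linarith
  also have "\<dots> \<le> 30 * (ln k / ln x + 1 / k)"
    using lnk lnx K by (simp add: field_simps)
  finally show ?thesis .
qed

lemma abs_prob_good_minus_1:
  fixes x k :: real and t :: nat
  assumes "x \<ge> 1"
  shows "\<bar>prob_good x k t - 1\<bar> = real (card {m \<in> {1..nat \<lfloor>x\<rfloor>}. \<not> good k t m}) / real (nat \<lfloor>x\<rfloor>)"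
proof -
  define N where "N = nat \<lfloor>x\<rfloor>"
  have "N \<ge> 1" using assms by (simp add: N_def le_nat_iff)
  have "card {1..N} = card {m \<in> {1..N}. good k t m} + card {m \<in> {1..N}. \<not> good k t m}"
    using card_Int_Diff[of "{1..N}" "{m. good k t m}"] by (simp add: Int_def set_diff_eq)
  then have "real (card {m \<in> {1..N}. good k t m}) = real N - real (card {m \<in> {1..N}. \<not> good k t m})"
    by simp
  with \<open>N \<ge> 1\<close> show ?thesis
    unfolding prob_good_def N_def[symmetric] by (simp add: field_simps)
qed

lemma real_card_not_good_le:
  fixes k :: real and t N :: nat
  defines "K \<equiv> nat \<lfloor>k\<rfloor>"
  assumes N: "N \<ge> 2" and K: "K \<ge> 1"
  shows "real (card {m \<in> {1..N}. \<not> good k t m})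
           \<le> real t * (1 + (sqrt (real N) + 8 * real N * ln (real K) / ln (real N)) + real N / real K)"
proof -
  define S where "S = {n \<in> {1..N}. smooth K n}"
  define Q where "Q = {n \<in> {1..N}. \<exists>j. K < j \<and> j\<^sup>2 dvd n}"
  have bad: "card {m \<in> {1..N}. \<not> good k t m} \<le> t * (1 + card S + card Q)"
    unfolding S_def Q_def K_def by (rule card_not_good_le)
  have "real (card {m \<in> {1..N}. \<not> good k t m}) \<le> real t * (1 + real (card S) + real (card Q))"
    using of_nat_mono[OF bad, where 'a = real] by (simp add: distrib_left)
  also have "\<dots> \<le> real t * (1 + (sqrt (real N) + 8 * real N * ln (real K) / ln (real N)) + real N / real K)"
    unfolding S_def Q_def using N K
    by (intro mult_left_mono add_mono order_refl card_smooth_le card_square_divisible_le) auto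
  finally show ?thesis .
qed

lemma prob_good_error_le:
  fixes x k :: real and t :: nat
  assumes x: "x \<ge> 2" and k: "k \<ge> 2"
  shows "\<bar>prob_good x k t - 1\<bar> \<le> 30 * (real t * ln k / ln x + real t / k)"
proof -
  define N where "N = nat \<lfloor>x\<rfloor>"
  define K where "K = nat \<lfloor>k\<rfloor>"
  have N: "N \<ge> 2" "real N \<le> x" "x < real N + 1"
    using x unfolding N_def by (auto simp: le_nat_iff le_floor_iff)
  have K: "K \<ge> 2" "real K \<le> k" "k < real K + 1"
    using k unfolding K_def by (auto simp: le_nat_iff le_floor_iff)
  have "\<bar>prob_good x k t - 1\<bar> = real (card {m \<in> {1..N}. \<not> good k t m}) / real N"
    unfolding N_def using x by (intro abs_prob_good_minus_1) simp
  also have "\<dots> \<le> real t * ((1 + (sqrt (real N) + 8 * real N * ln (real K) / ln (real N))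
      + real N / real K) / real N)"
    unfolding times_divide_eq_right K_def using N K
    by (intro divide_right_mono real_card_not_good_le) (simp_all add: K_def)
  also have "\<dots> \<le> real t * (30 * (ln k / ln x + 1 / k))"
    using N K by (intro mult_left_mono error_terms_le) auto
  also have "\<dots> = 30 * (real t * ln k / ln x + real t / k)"
    by (simp add: field_simps)
  finally show ?thesis .
qed

theorem corollary4p3:
  shows "\<exists>C::real. \<forall>(x::real) (k::real) (t::nat). x \<ge> 2 \<longrightarrow> k \<ge> 2 \<longrightarrow> t \<ge> 1 \<longrightarrow>
           \<bar>prob_good x k t - 1\<bar> \<le> C * (real t * ln k / ln x + real t / k)"
  using prob_good_error_le by blast

end
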